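(* In the setting of the context (FSR scheme with direct flux reconstruction), let $\mathcal{E}_j=(\Phi_{j+1/2}-\Phi_{j-1/2})/h$ evaluated on exact nodal values. If $\kappa_3=\kappa-1$, then for arbitrary $\theta,\theta_3$, as $h\to0$ with derivatives at $x_j$, $$\mathcal{E}_j=\frac{\partial f}{\partial x}+\frac{3\theta-1}{12}\frac{\partial^3 f}{\partial x^3}h^2+\frac{15(\theta-\theta_3)-13}{240}\frac{\partial^5 f}{\partial x^5}h^4+\frac{\kappa-1}{32}\left[\frac{\partial D}{\partial x}\frac{\partial^5 u}{\partial x^5}+D(u(x_j))\frac{\partial^6 u}{\partial x^6}\right]h^5+O(h^6),$$ where $f$ denotes $f(u(x))$ and $\partial D/\partial x=\frac{d}{dx}D(u(x))$. In particular, with $\theta=1/3$ and $\theta_3=-8/15$ the scheme is fifth-order accurate, and sixth-order accurate if $D\equiv0$.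
   Context: Let $h>0$, uniform grid $x_i=ih$, $i\in\mathbb{Z}$. Let $u$ be a smooth real function of $x$, $u_i=u(x_i)$; let $f$ (flux) and $D$ (dissipation coefficient) be smooth real functions of one variable; $f_i=f(u_i)$. For nodal values $g_i$ define successive central differences $(g_x)_i=(g_{i+1}-g_{i-1})/(2h)$, $(g_{xx})_i=((g_x)_{i+1}-(g_x)_{i-1})/(2h)$, and for the face $i+1/2$ with $j=i$, $k=i+1$, define $T_j[g]=\frac h4((g_x)_k-(g_x)_j)-\frac{h^2}{4}(g_{xx})_j$, $T_k[g]=\frac h4((g_x)_k-(g_x)_j)-\frac{h^2}{4}(g_{xx})_k$. Reconstructed solution states (parameters $\kappa,\kappa_3$): $u_L=\kappa\frac{u_j+u_k}{2}+(1-\kappa)[u_j+\frac h2(u_x)_j]+\kappa_3T_j[u]$, $u_R=\kappa\frac{u_j+u_k}{2}+(1-\kappa)[u_k-\frac h2(u_x)_k]+\kappa_3T_k[u]$. Reconstructed fluxes (parameters $\theta,\theta_3$): $f_L=\theta\frac{f_j+f_k}{2}+(1-\theta)[f_j+\frac h2(f_x)_j]+\theta_3T_j[f]$, $f_R=\theta\frac{f_j+f_k}{2}+(1-\theta)[f_k-\frac h2(f_x)_k]+\theta_3T_k[f]$. Numerical flux: $\Phi_{i+1/2}=\frac12(f_L+f_R)-\frac12D_{i+1/2}(u_R-u_L)$, with $D_{i+1/2}=\bar D(u_i,u_{i+1})$ for a smooth symmetric $\bar D$ with $\bar D(v,v)=D(v)$. *)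

theory Defs
  imports "HOL-Analysis.Analysis" "HOL-Library.Landau_Symbols"
begin

definition smooth1 :: "(real \<Rightarrow> real) \<Rightarrow> bool" where
  "smooth1 g \<longleftrightarrow> (\<forall>k x. ((deriv ^^ k) g) differentiable (at x))"

fun Ck2 :: "nat \<Rightarrow> (real \<times> real \<Rightarrow> real) \<Rightarrow> bool" where
  "Ck2 0 g = continuous_on UNIV g"
| "Ck2 (Suc k) g = (\<exists>g1 g2. (\<forall>p. (g has_derivative (\<lambda>v. fst v * g1 p + snd v * g2 p)) (at p))
                      \<and> Ck2 k g1 \<and> Ck2 k g2)"

definition smooth2 :: "(real \<Rightarrow> real \<Rightarrow> real) \<Rightarrow> bool" where
  "smooth2 g \<longleftrightarrow> (\<forall>k. Ck2 k (\<lambda>p. g (fst p) (snd p)))"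

definition cdx :: "real \<Rightarrow> (int \<Rightarrow> real) \<Rightarrow> int \<Rightarrow> real" where
  "cdx h g i = (g (i + 1) - g (i - 1)) / (2 * h)"

definition cdxx :: "real \<Rightarrow> (int \<Rightarrow> real) \<Rightarrow> int \<Rightarrow> real" where
  "cdxx h g i = (cdx h g (i + 1) - cdx h g (i - 1)) / (2 * h)"

(* face i+1/2 with j = i, k = i+1 *)
definition Tj :: "real \<Rightarrow> (int \<Rightarrow> real) \<Rightarrow> int \<Rightarrow> real" where
  "Tj h g i = h / 4 * (cdx h g (i + 1) - cdx h g i) - h^2 / 4 * cdxx h g i"

definition Tk :: "real \<Rightarrow> (int \<Rightarrow> real) \<Rightarrow> int \<Rightarrow> real" where
  "Tk h g i = h / 4 * (cdx h g (i + 1) - cdx h g i) - h^2 / 4 * cdxx h g (i + 1)"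

(* left/right reconstructed states at face i+1/2, parameters a (= kappa or theta), a3 *)
definition recL :: "real \<Rightarrow> real \<Rightarrow> real \<Rightarrow> (int \<Rightarrow> real) \<Rightarrow> int \<Rightarrow> real" where
  "recL h a a3 g i = a * (g i + g (i + 1)) / 2 + (1 - a) * (g i + h / 2 * cdx h g i) + a3 * Tj h g i"

definition recR :: "real \<Rightarrow> real \<Rightarrow> real \<Rightarrow> (int \<Rightarrow> real) \<Rightarrow> int \<Rightarrow> real" where
  "recR h a a3 g i = a * (g i + g (i + 1)) / 2 + (1 - a) * (g (i + 1) - h / 2 * cdx h g (i + 1)) + a3 * Tk h g i"

definition numflux :: "real \<Rightarrow> real \<Rightarrow> real \<Rightarrow> real \<Rightarrow> real \<Rightarrow> (real \<Rightarrow> real)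
    \<Rightarrow> (real \<Rightarrow> real \<Rightarrow> real) \<Rightarrow> (int \<Rightarrow> real) \<Rightarrow> int \<Rightarrow> real" where
  "numflux h \<kappa> \<kappa>3 \<theta> \<theta>3 f Dbar U i =
     (recL h \<theta> \<theta>3 (\<lambda>m. f (U m)) i + recR h \<theta> \<theta>3 (\<lambda>m. f (U m)) i) / 2
     - Dbar (U i) (U (i + 1)) * (recR h \<kappa> \<kappa>3 U i - recL h \<kappa> \<kappa>3 U i) / 2"

(* truncation quantity E_j = (Phi_{j+1/2} - Phi_{j-1/2})/h on exact nodal values,
   for the grid with node x_j = x and spacing h, i.e. node j+m is at x + m h *)
definition schemeE :: "real \<Rightarrow> real \<Rightarrow> real \<Rightarrow> real \<Rightarrow> (real \<Rightarrow> real)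
    \<Rightarrow> (real \<Rightarrow> real \<Rightarrow> real) \<Rightarrow> (real \<Rightarrow> real) \<Rightarrow> real \<Rightarrow> real \<Rightarrow> real" where
  "schemeE \<kappa> \<kappa>3 \<theta> \<theta>3 f Dbar u x h =
     (let U = (\<lambda>m::int. u (x + of_int m * h)) in
      (numflux h \<kappa> \<kappa>3 \<theta> \<theta>3 f Dbar U 0 - numflux h \<kappa> \<kappa>3 \<theta> \<theta>3 f Dbar U (-1)) / h)"

end

theory Submission
  imports Defs
begin

(* The flux part of E_j is h^-1 times an antisymmetric six-point combination of the values
   f(u(x + m h)), and Taylor expansion to order 7 produces the f-terms.  With kappa3 = kappa - 1
   the jump u_R - u_L at a face is (1 - kappa) times a six-point difference that annihilates
   polynomials of degree at most 4, so at the faces x + h/2 and x - h/2 it equals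
   u5 h^5/16 + u6 h^6/32 resp. u5 h^5/16 - u6 h^6/32 up to O(h^7), where uk is the k-th
   derivative of u at x.  By symmetry of Dbar the dissipation coefficients at these faces are
   D(u) + (D o u)' h/2 resp. D(u) - (D o u)' h/2 up to O(h^2).  Hence the h^5 terms of the two
   dissipation fluxes cancel, and the surviving h^6 term, divided by 2 h, is the h^5 term of
   the expansion. *)

definition stencil :: "(real \<Rightarrow> real) \<Rightarrow> real \<Rightarrow> real \<Rightarrow> (real \<times> real) list \<Rightarrow> real" where
  "stencil g x h S = (\<Sum>(a, c) \<leftarrow> S. c * g (x + a * h))"

(* Weights of h (Phi_{j+1/2} - Phi_{j-1/2}) in the flux part, as offsets from x_j *)
definition flux_weights :: "real \<Rightarrow> real \<Rightarrow> (real \<times> real) list" where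
  "flux_weights \<theta> \<theta>3 =
     (let w1 = 3/4 - \<theta>/4 - 5*\<theta>3/32; w2 = (\<theta> + \<theta>3 - 1)/8; w3 = -\<theta>3/32
      in [(1, w1), (-1, -w1), (2, w2), (-2, -w2), (3, w3), (-3, -w3)])"

(* (u_R - u_L) / (1 - kappa) at the face x_j + h/2 for kappa3 = kappa - 1 *)
definition jump_weights :: "(real \<times> real) list" where
  "jump_weights = [(-2, -1/16), (-1, 5/16), (0, -5/8), (1, 5/8), (2, -5/16), (3, 1/16)]"

lemma recL_nodal:
  assumes "h \<noteq> 0"
  shows "recL h a a3 g i = a * (g i + g (i + 1)) / 2 + (1 - a) * (g i + (g (i + 1) - g (i - 1)) / 4)
     + a3 * ((g (i + 2) - g i - g (i + 1) + g (i - 1)) / 8 - (g (i + 2) - 2 * g i + g (i - 2)) / 16)"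
  using assms unfolding recL_def Tj_def cdxx_def cdx_def by (simp add: field_simps power2_eq_square)

lemma recR_nodal:
  assumes "h \<noteq> 0"
  shows "recR h a a3 g i = a * (g i + g (i + 1)) / 2 + (1 - a) * (g (i + 1) - (g (i + 2) - g i) / 4)
     + a3 * ((g (i + 2) - g i - g (i + 1) + g (i - 1)) / 8 - (g (i + 3) - 2 * g (i + 1) + g (i - 1)) / 16)"
  using assms unfolding recR_def Tk_def cdxx_def cdx_def by (simp add: field_simps power2_eq_square)

lemma schemeE_stencil_form:
  assumes "h \<noteq> 0"
  shows "schemeE \<kappa> (\<kappa> - 1) \<theta> \<theta>3 f Dbar u x h =
     stencil (\<lambda>y. f (u y)) x h (flux_weights \<theta> \<theta>3) / h
     - (1 - \<kappa>) * (Dbar (u x) (u (x + h)) * stencil u x h jump_weights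
                  - Dbar (u (x - h)) (u x) * stencil u x h (map (\<lambda>(a, c). (a - 1, c)) jump_weights)) / (2 * h)"
  using assms
  unfolding schemeE_def numflux_def Let_def stencil_def flux_weights_def jump_weights_def
  by (simp add: recL_nodal recR_nodal field_simps)

lemma eventually_at_right_0_less_1: "eventually (\<lambda>h::real. 0 < h \<and> h < 1) (at_right 0)"
  unfolding eventually_at_right[OF zero_less_one] by (rule exI[of _ 1]) auto

lemma bigo_power_at_right_0_mono:
  "m \<le> n \<Longrightarrow> (\<lambda>h::real. h ^ n) \<in> O[at_right 0](\<lambda>h. h ^ m)"
  by (rule bigoI[where c = 1])
     (use eventually_at_right_0_less_1 in eventually_elim, auto intro: power_decreasing)

lemma monomial_bigo_at_right_0:
  "m \<le> n \<Longrightarrow> (\<lambda>h::real. c * h ^ n) \<in> O[at_right 0](\<lambda>h. h ^ m)"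
  using bigo_power_at_right_0_mono by simp

lemma bigo_divide_by_h:
  assumes "(\<lambda>h. f h - h * g h) \<in> O[at_right 0](\<lambda>h::real. h ^ Suc n)"
  shows "(\<lambda>h. f h / h - g h) \<in> O[at_right 0](\<lambda>h. h ^ n)"
proof -
  have nonzero: "eventually (\<lambda>h::real. h \<noteq> 0) (at_right 0)"
    by (simp add: eventually_at_filter)
  have "(\<lambda>h. (f h - h * g h) / h) \<in> O[at_right 0](\<lambda>h. h ^ n)"
    using assms by (simp add: landau_o.big.divide_eq2[OF nonzero] mult.commute)
  moreover have "eventually (\<lambda>h. (f h - h * g h) / h = f h / h - g h) (at_right 0)"
    using nonzero by eventually_elim (simp add: diff_divide_distrib)
  ultimately show ?thesis
    by (rule landau_o.big.in_cong[THEN iffD1, rotated])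
qed

lemma product_remainder_bigo:
  fixes A P p q :: "real \<Rightarrow> real"
  assumes A: "(\<lambda>h. A h - p h) \<in> O[at_right 0](\<lambda>h. h ^ k)" and p: "p \<in> O[at_right 0](\<lambda>h. h ^ i)"
    and P: "(\<lambda>h. P h - q h) \<in> O[at_right 0](\<lambda>h. h ^ m)" and q: "q \<in> O[at_right 0](\<lambda>h. h ^ j)"
    and "n \<le> i + m" "n \<le> k + j" "n \<le> k + m"
  shows "(\<lambda>h. A h * P h - p h * q h) \<in> O[at_right 0](\<lambda>h. h ^ n)"
proof -
  have "(\<lambda>h. x h * y h) \<in> O[at_right 0](\<lambda>h. h ^ n)"
    if "x \<in> O[at_right 0](\<lambda>h. h ^ r)" "y \<in> O[at_right 0](\<lambda>h. h ^ s)" "n \<le> r + s" for x y :: "real \<Rightarrow> real" and r s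
    using landau_o.big.mult[OF that(1,2)] bigo_power_at_right_0_mono[OF that(3)]
    by (auto simp: power_add intro: landau_o.big_trans)
  from this[OF p P] this[OF A q] this[OF A P] assms(5-7)
  have "(\<lambda>h. p h * (P h - q h) + (A h - p h) * q h + (A h - p h) * (P h - q h)) \<in> O[at_right 0](\<lambda>h. h ^ n)"
    by (intro sum_in_bigo) auto
  then show ?thesis
    by (simp add: algebra_simps)
qed

lemma smooth1_has_real_derivative:
  assumes "smooth1 g"
  shows "((deriv ^^ k) g has_real_derivative (deriv ^^ Suc k) g y) (at y)"
  using assms unfolding smooth1_def by (simp add: DERIV_deriv_iff_real_differentiable)

definition differentiable_upto :: "nat \<Rightarrow> (real \<Rightarrow> real) \<Rightarrow> bool" where
  "differentiable_upto k g \<longleftrightarrow> (\<forall>j\<le>k. \<forall>y. (deriv ^^ j) g differentiable (at y))"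

lemma smooth1_iff_differentiable_upto: "smooth1 g \<longleftrightarrow> (\<forall>k. differentiable_upto k g)"
  unfolding smooth1_def differentiable_upto_def by auto

lemma differentiable_upto_0: "differentiable_upto 0 g \<longleftrightarrow> (\<forall>y. g differentiable (at y))"
  unfolding differentiable_upto_def by simp

lemma differentiable_upto_Suc:
  "differentiable_upto (Suc k) g \<longleftrightarrow> (\<forall>y. g differentiable (at y)) \<and> differentiable_upto k (deriv g)"
proof -
  have "(\<forall>j\<le>Suc k. P j) \<longleftrightarrow> P 0 \<and> (\<forall>j\<le>k. P (Suc j))" for P
    by (metis Suc_le_mono not0_implies_Suc le0)
  then show ?thesis
    unfolding differentiable_upto_def by (simp add: funpow_Suc_right del: funpow.simps)
qed

lemma differentiable_upto_SucD: "differentiable_upto (Suc k) g \<Longrightarrow> differentiable_upto k g"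
  unfolding differentiable_upto_def by auto

lemma real_field_differentiable_iff:
  fixes g :: "real \<Rightarrow> real"
  shows "g field_differentiable (at y) \<longleftrightarrow> g differentiable (at y)"
  by (metis DERIV_deriv_iff_field_differentiable DERIV_deriv_iff_real_differentiable)

lemma deriv_fun_add:
  fixes a b :: "real \<Rightarrow> real"
  assumes "\<And>y. a differentiable (at y)" and "\<And>y. b differentiable (at y)"
  shows "deriv (\<lambda>y. a y + b y) = (\<lambda>y. deriv a y + deriv b y)"
  using assms by (intro ext deriv_add) (simp_all add: real_field_differentiable_iff)

lemma deriv_fun_mult:
  fixes a b :: "real \<Rightarrow> real"
  assumes "\<And>y. a differentiable (at y)" and "\<And>y. b differentiable (at y)"
  shows "deriv (\<lambda>y. a y * b y) = (\<lambda>y. a y * deriv b y + deriv a y * b y)"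
  using assms by (intro ext deriv_mult) (simp_all add: real_field_differentiable_iff)

lemma deriv_fun_compose:
  fixes f u :: "real \<Rightarrow> real"
  assumes "\<And>y. f differentiable (at y)" and "\<And>y. u differentiable (at y)"
  shows "deriv (\<lambda>y. f (u y)) = (\<lambda>y. deriv f (u y) * deriv u y)"
  using assms deriv_chain[of u _ f] by (intro ext) (simp add: o_def real_field_differentiable_iff)

lemma differentiable_upto_add:
  "differentiable_upto k a \<Longrightarrow> differentiable_upto k b \<Longrightarrow> differentiable_upto k (\<lambda>y. a y + b y)"
proof (induction k arbitrary: a b)
  case 0
  then show ?case by (auto simp: differentiable_upto_0)
next
  case (Suc k)
  then show ?case
    by (auto simp: differentiable_upto_Suc deriv_fun_add)
qed

lemma differentiable_upto_mult:
  "differentiable_upto k a \<Longrightarrow> differentiable_upto k b \<Longrightarrow> differentiable_upto k (\<lambda>y. a y * b y)"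
proof (induction k arbitrary: a b)
  case 0
  then show ?case by (auto simp: differentiable_upto_0)
next
  case (Suc k)
  then have "differentiable_upto k a" "differentiable_upto k b"
    by (auto dest: differentiable_upto_SucD)
  with Suc show ?case
    by (auto simp: differentiable_upto_Suc deriv_fun_mult intro!: differentiable_upto_add)
qed

lemma differentiable_upto_compose:
  "differentiable_upto k f \<Longrightarrow> differentiable_upto k u \<Longrightarrow> differentiable_upto k (\<lambda>y. f (u y))"
proof (induction k arbitrary: f u)
  case 0
  then show ?case
    using differentiable_chain_at[of u _ f] by (auto simp: differentiable_upto_0 o_def)
next
  case (Suc k)
  then have "differentiable_upto k u" by (auto dest: differentiable_upto_SucD)
  with Suc show ?case
    using differentiable_chain_at[of u _ f]
    by (auto simp: differentiable_upto_Suc deriv_fun_compose o_def intro!: differentiable_upto_mult)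
qed

lemma smooth1_compose: "smooth1 f \<Longrightarrow> smooth1 u \<Longrightarrow> smooth1 (\<lambda>y. f (u y))"
  by (simp add: smooth1_iff_differentiable_upto differentiable_upto_compose)

definition taylor_polynomial :: "(real \<Rightarrow> real) \<Rightarrow> real \<Rightarrow> nat \<Rightarrow> real \<Rightarrow> real" where
  "taylor_polynomial g c n t = (\<Sum>k<n. (deriv ^^ k) g c / fact k * t ^ k)"

lemma taylor_polynomial_7:
  "taylor_polynomial g c 7 t = g c + deriv g c * t + (deriv ^^ 2) g c / 2 * t ^ 2
     + (deriv ^^ 3) g c / 6 * t ^ 3 + (deriv ^^ 4) g c / 24 * t ^ 4
     + (deriv ^^ 5) g c / 120 * t ^ 5 + (deriv ^^ 6) g c / 720 * t ^ 6"
  unfolding taylor_polynomial_def by (simp add: eval_nat_numeral fact_Suc del: funpow.simps) simp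

lemma taylor_remainder_bigo:
  assumes "smooth1 g"
  shows "(\<lambda>h. g (c + a * h) - taylor_polynomial g c n (a * h)) \<in> O[at_right 0](\<lambda>h. h ^ n)"
proof -
  let ?d = "\<lambda>m t. (deriv ^^ m) g (c + t)"
  have shift: "((\<lambda>t. c + t) has_real_derivative 1) (at t)" for t
    by (auto intro!: derivative_eq_intros)
  have d: "\<forall>m t. DERIV (?d m) t :> ?d (Suc m) t"
    using DERIV_chain2[OF smooth1_has_real_derivative[OF assms] shift] by simp
  have "continuous_on (cball c \<bar>a\<bar>) ((deriv ^^ n) g)"
    using smooth1_has_real_derivative[OF assms, of n]
    by (meson DERIV_isCont continuous_at_imp_continuous_on)
  then have "bounded ((deriv ^^ n) g ` cball c \<bar>a\<bar>)"
    by (rule compact_imp_bounded[OF compact_continuous_image[OF _ compact_cball]])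
  then obtain B where B: "\<And>y. y \<in> cball c \<bar>a\<bar> \<Longrightarrow> \<bar>(deriv ^^ n) g y\<bar> \<le> B"
    unfolding bounded_iff by (auto simp del: mem_cball)
  show ?thesis
  proof (rule bigoI[where c = "B * \<bar>a\<bar> ^ n / fact n"])
    show "\<forall>\<^sub>F h in at_right 0. norm (g (c + a * h) - taylor_polynomial g c n (a * h))
            \<le> B * \<bar>a\<bar> ^ n / fact n * norm (h ^ n)"
      using eventually_at_right_0_less_1
    proof eventually_elim
      case (elim h)
      obtain t where t: "\<bar>t\<bar> \<le> \<bar>a * h\<bar>"
        and lagrange: "g (c + a * h) = (\<Sum>m<n. ?d m 0 / fact m * (a * h) ^ m) + ?d n t / fact n * (a * h) ^ n"
        using Maclaurin_all_le[of ?d "\<lambda>t. g (c + t)", OF _ d, of "a * h" n] by auto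
      have "\<bar>t\<bar> \<le> \<bar>a\<bar>"
        using t elim mult_left_le[of h "\<bar>a\<bar>"] by (simp add: abs_mult)
      then have "\<bar>?d n t\<bar> \<le> B"
        using B[of "c + t"] by (simp add: dist_real_def)
      then have "\<bar>?d n t\<bar> * \<bar>a\<bar> ^ n / fact n * h ^ n \<le> B * \<bar>a\<bar> ^ n / fact n * h ^ n"
        using elim by (intro mult_right_mono divide_right_mono) auto
      then show ?case
        using lagrange elim by (simp add: taylor_polynomial_def abs_mult power_mult_distrib power_abs)
    qed
  qed
qed

lemma stencil_taylor_bigo:
  assumes "smooth1 g"
  shows "(\<lambda>h. stencil g x h S - stencil (taylor_polynomial g x n) 0 h S) \<in> O[at_right 0](\<lambda>h. h ^ n)"
proof (induction S)
  case Nil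
  then show ?case by (simp add: stencil_def)
next
  case (Cons p S)
  obtain a c where p: "p = (a, c)" by fastforce
  have "stencil g x h (p # S) - stencil (taylor_polynomial g x n) 0 h (p # S)
        = c * (g (x + a * h) - taylor_polynomial g x n (a * h))
          + (stencil g x h S - stencil (taylor_polynomial g x n) 0 h S)" for h
    by (simp add: stencil_def p algebra_simps)
  then show ?case
    using Cons.IH taylor_remainder_bigo[OF assms, of x a n] by (simp add: sum_in_bigo)
qed

lemma flux_stencil_expansion:
  assumes "smooth1 G"
  shows "(\<lambda>h. stencil G x h (flux_weights \<theta> \<theta>3)
            - h * (deriv G x + (3 * \<theta> - 1) / 12 * (deriv ^^ 3) G x * h ^ 2
                   + (15 * (\<theta> - \<theta>3) - 13) / 240 * (deriv ^^ 5) G x * h ^ 4))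
         \<in> O[at_right 0](\<lambda>h. h ^ 7)"
proof -
  have "stencil (taylor_polynomial G x 7) 0 h (flux_weights \<theta> \<theta>3)
        = h * (deriv G x + (3 * \<theta> - 1) / 12 * (deriv ^^ 3) G x * h ^ 2
               + (15 * (\<theta> - \<theta>3) - 13) / 240 * (deriv ^^ 5) G x * h ^ 4)" for h
    unfolding stencil_def flux_weights_def taylor_polynomial_7 Let_def
    by (simp add: field_simps) algebra
  with stencil_taylor_bigo[OF assms, where x = x and n = 7 and S = "flux_weights \<theta> \<theta>3"]
  show ?thesis by simp
qed

lemma jump_stencil_expansion:
  assumes "smooth1 u"
  shows "(\<lambda>h. stencil u x h jump_weights - ((deriv ^^ 5) u x / 16 * h ^ 5 + (deriv ^^ 6) u x / 32 * h ^ 6))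
         \<in> O[at_right 0](\<lambda>h. h ^ 7)"
proof -
  have "stencil (taylor_polynomial u x 7) 0 h jump_weights
        = (deriv ^^ 5) u x / 16 * h ^ 5 + (deriv ^^ 6) u x / 32 * h ^ 6" for h
    unfolding stencil_def jump_weights_def taylor_polynomial_7
    by (simp add: field_simps)
  with stencil_taylor_bigo[OF assms, where x = x and n = 7 and S = jump_weights]
  show ?thesis by simp
qed

lemma shifted_jump_stencil_expansion:
  assumes "smooth1 u"
  shows "(\<lambda>h. stencil u x h (map (\<lambda>(a, c). (a - 1, c)) jump_weights)
            - ((deriv ^^ 5) u x / 16 * h ^ 5 - (deriv ^^ 6) u x / 32 * h ^ 6))
         \<in> O[at_right 0](\<lambda>h. h ^ 7)"
proof -
  have "stencil (taylor_polynomial u x 7) 0 h (map (\<lambda>(a, c). (a - 1, c)) jump_weights)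
        = (deriv ^^ 5) u x / 16 * h ^ 5 - (deriv ^^ 6) u x / 32 * h ^ 6" for h
    unfolding stencil_def jump_weights_def taylor_polynomial_7
    by (simp add: field_simps)
  with stencil_taylor_bigo[OF assms, where x = x and n = 7
      and S = "map (\<lambda>(a, c). (a - 1, c)) jump_weights"]
  show ?thesis by simp
qed

lemma has_real_derivative_compose_pair:
  fixes F :: "real \<times> real \<Rightarrow> real"
  assumes "(F has_derivative (\<lambda>v. fst v * a + snd v * b)) (at (\<alpha> t, \<beta> t))"
    and "(\<alpha> has_real_derivative \<alpha>') (at t)" and "(\<beta> has_real_derivative \<beta>') (at t)"
  shows "((\<lambda>t. F (\<alpha> t, \<beta> t)) has_real_derivative \<alpha>' * a + \<beta>' * b) (at t)"
proof -
  have "((\<lambda>t. (\<alpha> t, \<beta> t)) has_derivative (\<lambda>s. (\<alpha>' * s, \<beta>' * s))) (at t)"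
    using has_derivative_Pair[OF assms(2,3)[unfolded has_field_derivative_def]] by simp
  from has_derivative_compose[OF this assms(1)] show ?thesis
    unfolding has_field_derivative_def by (rule has_derivative_eq_rhs) (auto simp: algebra_simps)
qed

lemma symmetric_has_derivative_partials_eq:
  fixes F :: "real \<times> real \<Rightarrow> real"
  assumes sym: "\<And>p q. F (p, q) = F (q, p)"
    and F: "(F has_derivative (\<lambda>w. fst w * a + snd w * b)) (at (v, v))"
  shows "a = b"
proof -
  have swap: "((\<lambda>w. (snd w, fst w)) has_derivative (\<lambda>w. (snd w, fst w))) (at (v, v))"
    by (intro has_derivative_Pair has_derivative_snd has_derivative_fst has_derivative_ident)
  have "(F has_derivative (\<lambda>w. fst w * a + snd w * b)) (at ((\<lambda>w. (snd w, fst w)) (v, v)))"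
    using F by simp
  from has_derivative_compose[OF swap this]
  have "((\<lambda>w. F (snd w, fst w)) has_derivative (\<lambda>w. snd w * a + fst w * b)) (at (v, v))"
    by simp
  then have "(F has_derivative (\<lambda>w. snd w * a + fst w * b)) (at (v, v))"
    using sym by (simp add: case_prod_beta)
  from has_derivative_unique[OF F this] have "(\<lambda>w. fst w * a + snd w * b) = (\<lambda>w. snd w * a + fst w * b)" .
  from fun_cong[OF this, of "(1, 0)"] show "a = b" by simp
qed

lemma first_order_remainder_bigo:
  fixes \<psi> \<psi>' :: "real \<Rightarrow> real"
  assumes d: "\<And>t. (\<psi> has_real_derivative \<psi>' t) (at t)"
    and d2: "(\<psi>' has_real_derivative L) (at 0)"
  shows "(\<lambda>h. \<psi> h - (\<psi> 0 + \<psi>' 0 * h)) \<in> O[at_right 0](\<lambda>h. h ^ 2)"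
proof -
  have "((\<lambda>h. (\<psi>' (0 + h) - \<psi>' 0) / h) \<longlongrightarrow> L) (at 0)"
    using DERIV_D[OF d2] .
  from tendstoD[OF this zero_less_one] obtain r where r: "r > 0"
    and close: "\<And>\<xi>. \<xi> \<noteq> 0 \<Longrightarrow> dist \<xi> 0 < r \<Longrightarrow> dist ((\<psi>' (0 + \<xi>) - \<psi>' 0) / \<xi>) L < 1"
    unfolding eventually_at by blast
  have lipschitz: "\<bar>\<psi>' \<xi> - \<psi>' 0\<bar> \<le> (\<bar>L\<bar> + 1) * \<bar>\<xi>\<bar>" if "\<bar>\<xi>\<bar> < r" for \<xi>
  proof (cases "\<xi> = 0")
    case False
    then have "\<bar>(\<psi>' \<xi> - \<psi>' 0) / \<xi> - L\<bar> < 1"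
      using close[of \<xi>] that by (simp add: dist_real_def)
    then have "\<bar>(\<psi>' \<xi> - \<psi>' 0) / \<xi>\<bar> \<le> \<bar>L\<bar> + 1"
      by linarith
    then have "\<bar>\<psi>' \<xi> - \<psi>' 0\<bar> / \<bar>\<xi>\<bar> \<le> \<bar>L\<bar> + 1"
      by (simp add: abs_divide)
    with False show ?thesis by (simp add: divide_le_eq)
  qed simp
  have "eventually (\<lambda>h. 0 < h \<and> h < r) (at_right (0::real))"
    unfolding eventually_at_right[OF r] by (rule exI[of _ r]) (auto simp: r)
  then have "\<forall>\<^sub>F h in at_right 0. norm (\<psi> h - (\<psi> 0 + \<psi>' 0 * h)) \<le> (\<bar>L\<bar> + 1) * norm (h ^ 2)"
  proof eventually_elim
    case (elim h)
    obtain z where z: "0 < z" "z < h" and mvt: "\<psi> h - \<psi> 0 = (h - 0) * \<psi>' z"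
      using MVT2[of 0 h \<psi> \<psi>'] elim d by auto
    have "\<psi> h - (\<psi> 0 + \<psi>' 0 * h) = h * (\<psi>' z - \<psi>' 0)"
      using mvt by (simp add: algebra_simps)
    then have "\<bar>\<psi> h - (\<psi> 0 + \<psi>' 0 * h)\<bar> = h * \<bar>\<psi>' z - \<psi>' 0\<bar>"
      using elim by (simp add: abs_mult)
    also have "\<dots> \<le> h * ((\<bar>L\<bar> + 1) * h)"
    proof -
      have "(\<bar>L\<bar> + 1) * z \<le> (\<bar>L\<bar> + 1) * h"
        using z by (intro mult_left_mono) auto
      then show ?thesis
        using lipschitz[of z] z elim by (intro mult_left_mono) auto
    qed
    finally show ?case by (simp add: power2_eq_square mult_ac)
  qed
  then show ?thesis by (rule bigoI)
qed

lemma first_order_remainder_bigo_left: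
  fixes \<psi> \<psi>' :: "real \<Rightarrow> real"
  assumes "\<And>t. (\<psi> has_real_derivative \<psi>' t) (at t)"
    and "(\<psi>' has_real_derivative L) (at 0)"
  shows "(\<lambda>h. \<psi> (- h) - (\<psi> 0 - \<psi>' 0 * h)) \<in> O[at_right 0](\<lambda>h. h ^ 2)"
proof -
  have "((\<lambda>t. \<psi> (- t)) has_real_derivative - \<psi>' (- t)) (at t)" for t
    using DERIV_chain2[OF assms(1) DERIV_minus[OF DERIV_ident]] by simp
  moreover have "(\<psi>' has_real_derivative L) (at (- 0))"
    using assms(2) by simp
  from DERIV_minus[OF DERIV_chain2[OF this DERIV_minus[OF DERIV_ident]]]
  have "((\<lambda>t. - \<psi>' (- t)) has_real_derivative L) (at 0)"
    by simp
  ultimately show ?thesis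
    using first_order_remainder_bigo[of "\<lambda>t. \<psi> (- t)" "\<lambda>t. - \<psi>' (- t)" L] by simp
qed

lemma dissipation_coefficient_expansion:
  fixes u D :: "real \<Rightarrow> real" and Dbar :: "real \<Rightarrow> real \<Rightarrow> real"
  assumes u: "smooth1 u" and Dbar: "smooth2 Dbar"
    and sym: "\<And>a b. Dbar a b = Dbar b a" and diag: "\<And>v. Dbar v v = D v"
  shows "(\<lambda>h. Dbar (u x) (u (x + h)) - (D (u x) + deriv (\<lambda>y. D (u y)) x / 2 * h))
           \<in> O[at_right 0](\<lambda>h. h ^ 2)"
    and "(\<lambda>h. Dbar (u (x - h)) (u x) - (D (u x) - deriv (\<lambda>y. D (u y)) x / 2 * h))
           \<in> O[at_right 0](\<lambda>h. h ^ 2)"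
proof -
  define F where "F p = Dbar (fst p) (snd p)" for p
  have "Ck2 (Suc (Suc 0)) F"
    using Dbar unfolding smooth2_def F_def by blast
  then obtain g1 g2 k1 k2
    where dF: "\<And>p. (F has_derivative (\<lambda>v. fst v * g1 p + snd v * g2 p)) (at p)"
      and dg2: "\<And>p. (g2 has_derivative (\<lambda>v. fst v * k1 p + snd v * k2 p)) (at p)"
    by auto
  have partials_eq: "g1 (v, v) = g2 (v, v)" for v
    using sym by (intro symmetric_has_derivative_partials_eq[OF _ dF]) (simp add: F_def)
  have du: "(u has_real_derivative deriv u t) (at t)" for t
    using smooth1_has_real_derivative[OF u, of 0] by simp
  have shift: "((\<lambda>t. x + t) has_real_derivative 1) (at t)" for t
    by (auto intro!: derivative_eq_intros)
  have du_shift: "((\<lambda>t. u (x + t)) has_real_derivative deriv u (x + t)) (at t)" for t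
    using DERIV_chain2[OF du shift] by simp
  have ddu_shift: "((\<lambda>t. deriv u (x + t)) has_real_derivative (deriv ^^ 2) u (x + t)) (at t)" for t
    using DERIV_chain2[OF smooth1_has_real_derivative[OF u, of 1] shift] by (simp add: numeral_2_eq_2)
  define \<psi> where "\<psi> t = F (u x, u (x + t))" for t
  define \<psi>' where "\<psi>' t = deriv u (x + t) * g2 (u x, u (x + t))" for t
  have d\<psi>: "(\<psi> has_real_derivative \<psi>' t) (at t)" for t
    using has_real_derivative_compose_pair[OF dF DERIV_const[of "u x"] du_shift]
    unfolding \<psi>_def[abs_def] \<psi>'_def by simp
  have "((\<lambda>t. g2 (u x, u (x + t))) has_real_derivative deriv u x * k2 (u x, u x)) (at 0)"
    using has_real_derivative_compose_pair[OF dg2 DERIV_const[of "u x"] du_shift, of 0] by simp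
  from DERIV_mult[OF ddu_shift this]
  obtain L where d\<psi>': "(\<psi>' has_real_derivative L) (at 0)"
    unfolding \<psi>'_def[abs_def] by blast
  have "((\<lambda>y. D (u y)) has_real_derivative deriv u x * g1 (u x, u x) + deriv u x * g2 (u x, u x)) (at x)"
    using has_real_derivative_compose_pair[OF dF du du, of x] by (simp add: F_def diag)
  then have "deriv (\<lambda>y. D (u y)) x / 2 = \<psi>' 0"
    using partials_eq by (simp add: DERIV_imp_deriv \<psi>'_def)
  moreover have "\<psi> 0 = D (u x)" "\<psi> h = Dbar (u x) (u (x + h))" "\<psi> (- h) = Dbar (u (x - h)) (u x)" for h
    by (simp_all add: \<psi>_def F_def diag sym[of "u x"])
  ultimately show "(\<lambda>h. Dbar (u x) (u (x + h)) - (D (u x) + deriv (\<lambda>y. D (u y)) x / 2 * h))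
                     \<in> O[at_right 0](\<lambda>h. h ^ 2)"
    and "(\<lambda>h. Dbar (u (x - h)) (u x) - (D (u x) - deriv (\<lambda>y. D (u y)) x / 2 * h))
                     \<in> O[at_right 0](\<lambda>h. h ^ 2)"
    using first_order_remainder_bigo[OF d\<psi> d\<psi>'] first_order_remainder_bigo_left[OF d\<psi> d\<psi>']
    by simp_all
qed

lemma dissipation_difference_expansion:
  fixes u D :: "real \<Rightarrow> real" and Dbar :: "real \<Rightarrow> real \<Rightarrow> real"
  assumes u: "smooth1 u" and Dbar: "smooth2 Dbar"
    and sym: "\<And>a b. Dbar a b = Dbar b a" and diag: "\<And>v. Dbar v v = D v"
  shows "(\<lambda>h. Dbar (u x) (u (x + h)) * stencil u x h jump_weights
            - Dbar (u (x - h)) (u x) * stencil u x h (map (\<lambda>(a, c). (a - 1, c)) jump_weights)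
            - (deriv (\<lambda>y. D (u y)) x * (deriv ^^ 5) u x + D (u x) * (deriv ^^ 6) u x) / 16 * h ^ 6)
         \<in> O[at_right 0](\<lambda>h. h ^ 7)"
proof -
  define a1 where "a1 = deriv (\<lambda>y. D (u y)) x / 2"
  define c5 where "c5 = (deriv ^^ 5) u x / 16"
  define c6 where "c6 = (deriv ^^ 6) u x / 32"
  have p: "(\<lambda>h. D (u x) + a1 * h) \<in> O[at_right 0](\<lambda>h. h ^ 0)"
    and p': "(\<lambda>h. D (u x) - a1 * h) \<in> O[at_right 0](\<lambda>h. h ^ 0)"
    using monomial_bigo_at_right_0[of 0 0 "D (u x)"] monomial_bigo_at_right_0[of 0 1 a1]
    by (auto intro: sum_in_bigo)
  have q: "(\<lambda>h. c5 * h ^ 5 + c6 * h ^ 6) \<in> O[at_right 0](\<lambda>h. h ^ 5)"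
    and q': "(\<lambda>h. c5 * h ^ 5 - c6 * h ^ 6) \<in> O[at_right 0](\<lambda>h. h ^ 5)"
    using monomial_bigo_at_right_0[of 5 5 c5] monomial_bigo_at_right_0[of 5 6 c6]
    by (auto intro: sum_in_bigo)
  note Dbar_expansion = dissipation_coefficient_expansion[OF u Dbar sym diag, of x, folded a1_def]
  have right: "(\<lambda>h. Dbar (u x) (u (x + h)) * stencil u x h jump_weights
                  - (D (u x) + a1 * h) * (c5 * h ^ 5 + c6 * h ^ 6)) \<in> O[at_right 0](\<lambda>h. h ^ 7)"
    by (rule product_remainder_bigo[OF Dbar_expansion(1) p
          jump_stencil_expansion[OF u, of x, folded c5_def c6_def] q]) simp_all
  have left: "(\<lambda>h. Dbar (u (x - h)) (u x) * stencil u x h (map (\<lambda>(a, c). (a - 1, c)) jump_weights)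
                  - (D (u x) - a1 * h) * (c5 * h ^ 5 - c6 * h ^ 6)) \<in> O[at_right 0](\<lambda>h. h ^ 7)"
    by (rule product_remainder_bigo[OF Dbar_expansion(2) p'
          shifted_jump_stencil_expansion[OF u, of x, folded c5_def c6_def] q']) simp_all
  have cancel: "(D (u x) + a1 * h) * (c5 * h ^ 5 + c6 * h ^ 6) - (D (u x) - a1 * h) * (c5 * h ^ 5 - c6 * h ^ 6)
        = (deriv (\<lambda>y. D (u y)) x * (deriv ^^ 5) u x + D (u x) * (deriv ^^ 6) u x) / 16 * h ^ 6" for h
  proof -
    have "2 * (D (u x) * c6 + a1 * c5)
          = (deriv (\<lambda>y. D (u y)) x * (deriv ^^ 5) u x + D (u x) * (deriv ^^ 6) u x) / 16"
      by (simp add: a1_def c5_def c6_def field_simps)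
    moreover have "(D (u x) + a1 * h) * (c5 * h ^ 5 + c6 * h ^ 6) - (D (u x) - a1 * h) * (c5 * h ^ 5 - c6 * h ^ 6)
          = 2 * (D (u x) * c6 + a1 * c5) * h ^ 6"
      by (simp add: algebra_simps eval_nat_numeral)
    ultimately show ?thesis
      by simp
  qed
  show ?thesis
    using sum_in_bigo(2)[OF right left] by (simp only: cancel[symmetric]) (simp add: algebra_simps)
qed

lemma schemeE_expansion:
  fixes u f D :: "real \<Rightarrow> real" and Dbar :: "real \<Rightarrow> real \<Rightarrow> real"
  assumes u: "smooth1 u" and f: "smooth1 f" and Dbar: "smooth2 Dbar"
    and sym: "\<And>a b. Dbar a b = Dbar b a" and diag: "\<And>v. Dbar v v = D v"
  shows "(\<lambda>h. schemeE \<kappa> (\<kappa> - 1) \<theta> \<theta>3 f Dbar u x h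
            - ( deriv (\<lambda>y. f (u y)) x
              + (3 * \<theta> - 1) / 12 * (deriv ^^ 3) (\<lambda>y. f (u y)) x * h ^ 2
              + (15 * (\<theta> - \<theta>3) - 13) / 240 * (deriv ^^ 5) (\<lambda>y. f (u y)) x * h ^ 4
              + (\<kappa> - 1) / 32 * (deriv (\<lambda>y. D (u y)) x * (deriv ^^ 5) u x
                                 + D (u x) * (deriv ^^ 6) u x) * h ^ 5))
          \<in> O[at_right 0](\<lambda>h. h ^ 6)"
proof -
  define G where "G = (\<lambda>y. f (u y))"
  define flux where "flux h = deriv G x + (3 * \<theta> - 1) / 12 * (deriv ^^ 3) G x * h ^ 2
                      + (15 * (\<theta> - \<theta>3) - 13) / 240 * (deriv ^^ 5) G x * h ^ 4" for h
  define jump where "jump h = Dbar (u x) (u (x + h)) * stencil u x h jump_weights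
                      - Dbar (u (x - h)) (u x) * stencil u x h (map (\<lambda>(a, c). (a - 1, c)) jump_weights)" for h
  define C where "C = (deriv (\<lambda>y. D (u y)) x * (deriv ^^ 5) u x + D (u x) * (deriv ^^ 6) u x) / 16"
  have flux_part: "(\<lambda>h. stencil G x h (flux_weights \<theta> \<theta>3) / h - flux h) \<in> O[at_right 0](\<lambda>h. h ^ 6)"
    using flux_stencil_expansion[OF smooth1_compose[OF f u, folded G_def]]
    by (intro bigo_divide_by_h) (simp add: flux_def)
  have jump_part: "(\<lambda>h. jump h / h - C * h ^ 5) \<in> O[at_right 0](\<lambda>h. h ^ 6)"
  proof (intro bigo_divide_by_h)
    have "(\<lambda>h. jump h - h * (C * h ^ 5)) = (\<lambda>h. jump h - C * h ^ 6)"
      by (simp add: eval_nat_numeral mult_ac)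
    with dissipation_difference_expansion[OF u Dbar sym diag, of x, folded C_def jump_def]
    show "(\<lambda>h. jump h - h * (C * h ^ 5)) \<in> O[at_right 0](\<lambda>h. h ^ Suc 6)"
      by simp
  qed
  have "eventually (\<lambda>h. schemeE \<kappa> (\<kappa> - 1) \<theta> \<theta>3 f Dbar u x h
            - ( deriv (\<lambda>y. f (u y)) x
              + (3 * \<theta> - 1) / 12 * (deriv ^^ 3) (\<lambda>y. f (u y)) x * h ^ 2
              + (15 * (\<theta> - \<theta>3) - 13) / 240 * (deriv ^^ 5) (\<lambda>y. f (u y)) x * h ^ 4
              + (\<kappa> - 1) / 32 * (deriv (\<lambda>y. D (u y)) x * (deriv ^^ 5) u x
                                 + D (u x) * (deriv ^^ 6) u x) * h ^ 5)
          = (stencil G x h (flux_weights \<theta> \<theta>3) / h - flux h)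
            - (1 - \<kappa>) / 2 * (jump h / h - C * h ^ 5)) (at_right 0)"
    using eventually_at_right_0_less_1
  proof eventually_elim
    case (elim h)
    then show ?case
      by (simp add: schemeE_stencil_form G_def flux_def jump_def C_def field_simps)
  qed
  then show ?thesis
    using sum_in_bigo(2)[OF flux_part cmult_in_bigo_iff[THEN iffD2, OF disjI2, OF jump_part]]
    by (rule landau_o.big.in_cong[THEN iffD2])
qed

theorem mainTheorem4:
  fixes u f D :: "real \<Rightarrow> real" and Dbar :: "real \<Rightarrow> real \<Rightarrow> real"
    and \<kappa> \<kappa>3 \<theta> \<theta>3 x :: real
  assumes "smooth1 u" and "smooth1 f" and "smooth1 D" and "smooth2 Dbar"
    and "\<And>a b. Dbar a b = Dbar b a" and "\<And>v. Dbar v v = D v"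
    and "\<kappa>3 = \<kappa> - 1"
  shows "(\<lambda>h. schemeE \<kappa> \<kappa>3 \<theta> \<theta>3 f Dbar u x h
            - ( deriv (\<lambda>y. f (u y)) x
              + (3 * \<theta> - 1) / 12 * (deriv ^^ 3) (\<lambda>y. f (u y)) x * h ^ 2
              + (15 * (\<theta> - \<theta>3) - 13) / 240 * (deriv ^^ 5) (\<lambda>y. f (u y)) x * h ^ 4
              + (\<kappa> - 1) / 32 * (deriv (\<lambda>y. D (u y)) x * (deriv ^^ 5) u x
                                 + D (u x) * (deriv ^^ 6) u x) * h ^ 5))
          \<in> O[at_right 0](\<lambda>h. h ^ 6)
     \<and> (\<theta> = 1/3 \<and> \<theta>3 = -8/15 \<longrightarrow>
          (\<lambda>h. schemeE \<kappa> \<kappa>3 \<theta> \<theta>3 f Dbar u x h - deriv (\<lambda>y. f (u y)) x)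
            \<in> O[at_right 0](\<lambda>h. h ^ 5))
     \<and> (\<theta> = 1/3 \<and> \<theta>3 = -8/15 \<and> (\<forall>v. D v = 0) \<longrightarrow>
          (\<lambda>h. schemeE \<kappa> \<kappa>3 \<theta> \<theta>3 f Dbar u x h - deriv (\<lambda>y. f (u y)) x)
            \<in> O[at_right 0](\<lambda>h. h ^ 6))"
proof -
  define c where "c = (\<kappa> - 1) / 32 * (deriv (\<lambda>y. D (u y)) x * (deriv ^^ 5) u x + D (u x) * (deriv ^^ 6) u x)"
  define E where "E = schemeE \<kappa> (\<kappa> - 1) \<theta> \<theta>3 f Dbar u x"
  note expansion = schemeE_expansion[OF assms(1,2,4,5,6), of \<kappa> \<theta> \<theta>3 x, folded E_def]
  have fifth_order: "(\<lambda>h. E h - deriv (\<lambda>y. f (u y)) x - c * h ^ 5) \<in> O[at_right 0](\<lambda>h. h ^ 6)"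
    if "\<theta> = 1/3" "\<theta>3 = -8/15"
    using expansion unfolding that c_def by (simp add: diff_diff_eq)
  have "(\<lambda>h. E h - deriv (\<lambda>y. f (u y)) x) \<in> O[at_right 0](\<lambda>h. h ^ 5)"
    if "\<theta> = 1/3" "\<theta>3 = -8/15"
    using sum_in_bigo(1)[OF landau_o.big_trans[OF fifth_order[OF that] bigo_power_at_right_0_mono]
                            monomial_bigo_at_right_0[of 5 5 c]]
    by simp
  moreover have "c = 0" if "\<forall>v. D v = 0"
    using that by (simp add: c_def)
  ultimately show ?thesis
    using expansion fifth_order unfolding assms(7) E_def by auto
qed

end
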